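(* In any execution of the algorithm described in the context, for every round $r>0$, every non-faulty process $p_i$ eventually receives enough valid messages to satisfy the $\mathsf{is\_valid}$ predicate for round $r$; that is, eventually there exist $v\in\{0,1\}$ and $S\subseteq\mathit{aux\_values}_i$ with $\mathsf{is\_valid}(r,v,S)$ true.
   Context: Model. There are $n$ processes $p_1,\dots,p_n$ ($i$ is the index of $p_i$) communicating over an asynchronous, reliable, point-to-point network: every pair of processes is connected by a channel, message delays are finite but unbounded, and the network does not lose, duplicate, modify or create messages. "Broadcast" means sending the message to every process (including oneself). Messages are signed with unforgeable digital signatures ($\langle m\rangle_j$ denotes message $m$ signed by $p_j$); malformed messages or messages with invalid signatures are ignored. Up to $t$ processes are Byzantine (faulty) and may behave arbitrarily and collude, but cannot forge signatures of other processes; the remaining processes are non-faulty and follow the algorithm. It is assumed that $t<n/3$. Algorithm. Messages are of the form $\mathrm{AUX}[r](v)$ with round $r\in\mathbb{N}$ and $v\in\{0,1\}$, sent as a pair $(\langle \mathrm{AUX}[r](v)\rangle_j,\mathit{proofs})$ where $\mathit{proofs}$ is a set of signed AUX messages. The predicate $\mathsf{is\_valid}(r,est,\mathit{proofs})$ is: if $r=0$ return true; if $r=1$ return true iff $\mathit{proofs}$ contains signed $\mathrm{AUX}[0](est)$ messages from $t+1$ different processes; otherwise let $b=(r-1)\bmod 2$; if $est=b$, return true iff ($r=2$ and $\mathit{proofs}$ contains signed $\mathrm{AUX}[0](b)$ from $t+1$ different processes) or ($\mathit{proofs}$ contains signed $\mathrm{AUX}[r-2](b)$ from $n-t$ different processes);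 if $est\neq b$, return true iff $\mathit{proofs}$ contains signed $\mathrm{AUX}[r-1](\neg b)$ from $n-t$ different processes. Each process $p_i$ with proposal $v_i$ keeps a round counter $r_i$, a set $\mathit{aux\_values}_i$ of signed AUX messages, and timers indexed by naturals (timers $2r$ and $2r+1$ belong to round $r$; starting an already started or expired timer does nothing). It sets $r_i:=0$, $\mathit{aux\_values}_i:=\emptyset$, broadcasts $(\langle\mathrm{AUX}[0](v_i)\rangle_i,\emptyset)$, then repeats forever: (1) $r_i:=r_i+1$; (2) if $i=r_i\bmod n$ (coordinator), run Broadcast; (3) start timer $2r_i$ and wait until it expires; (4) if $i\ne r_i\bmod n$, run Broadcast; (5) wait until $\mathit{aux\_values}_i$ contains round-$r_i$ AUX messages from $n-t$ different processes; (6) start timer $2r_i+1$ and wait until it expires; (7) with $b_i=r_i\bmod 2$, if $\mathit{aux\_values}_i$ contains $\mathrm{AUX}[r_i](b_i)$ from $n-t$ different processes, decide $b_i$ (if not yet decided). Broadcast: let $\mathit{values}_i$ be the set of $v\in\{0,1\}$ such that $\mathsf{is\_valid}(r_i,v,S)$ holds for some $S\subseteq\mathit{aux\_values}_i$; let $bv=(r_i+1)\bmod 2$; if $p_i$ received from $p_{r_i\bmod n}$ a message $(\langle\mathrm{AUX}[r_i](p)\rangle_{r_i\bmod n},\cdot)$ with $p\in\mathit{values}_i$ then $est_i:=p$, else if $bv\in\mathit{values}_i$ then $est_i:=bv$, else $est_i:=\neg bv$; choose $\mathit{proofs}\subseteq\mathit{aux\_values}_i$ with $\mathsf{is\_valid}(r_i,est_i,\mathit{proofs})$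 and broadcast $(\langle\mathrm{AUX}[r_i](est_i)\rangle_i,\mathit{proofs})$. On receiving $(\langle\mathrm{AUX}[r_j](est_j)\rangle_j,\mathit{proofs})$: if $\mathsf{is\_valid}(r_j,est_j,\mathit{proofs})$, add the signed message and the messages of $\mathit{proofs}$ needed to satisfy the predicate to $\mathit{aux\_values}_i$ (such messages are called valid). Then let $\rho_i$ be the largest round for which $\mathit{aux\_values}_i$ contains messages from $t+1$ different processes, and set every timer with index $\le 2\rho_i$ to expired. *)

theory Defs
  imports Main
begin

text \<open>Since signatures are
  unforgeable, a signed message is identified with (signer, round, value).
  Values 0/1 are natural numbers; messages with other values are malformed.\<close>
datatype auxm = Aux (sgn: nat) (rnd: nat) (vl: nat)

datatype nmsg = NMsg (msrc: nat) (mdst: nat) (sm: auxm) (proofs: "auxm set")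

definition senders :: "auxm set \<Rightarrow> nat \<Rightarrow> nat \<Rightarrow> nat set" where
  "senders S r v = {j. Aux j r v \<in> S}"

definition rsenders :: "auxm set \<Rightarrow> nat \<Rightarrow> nat set" where
  "rsenders S r = {j. \<exists>v. Aux j r v \<in> S}"

definition is_valid :: "nat \<Rightarrow> nat \<Rightarrow> nat \<Rightarrow> nat \<Rightarrow> auxm set \<Rightarrow> bool" where
  "is_valid n t r est S =
     (if r = 0 then True
      else if r = 1 then card (senders S 0 est) \<ge> t + 1
      else (let b = (r - 1) mod 2 in
            if est = b
            then (r = 2 \<and> card (senders S 0 b) \<ge> t + 1) \<or> card (senders S (r - 2) b) \<ge> n - t
            else card (senders S (r - 1) (1 - b)) \<ge> n - t))"

definition needed :: "nat \<Rightarrow> nat \<Rightarrow> auxm set \<Rightarrow> auxm set" where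
  "needed r est S =
     (if r = 0 then {}
      else if r = 1 then {m \<in> S. rnd m = 0 \<and> vl m = est}
      else (let b = (r - 1) mod 2 in
            if est = b then {m \<in> S. rnd m = r - 2 \<and> vl m = b}
            else {m \<in> S. rnd m = r - 1 \<and> vl m = 1 - b}))"

datatype pcv = PInit | P1 | P2 | P3 | P3w | P4 | P5 | P6 | P6w | P7
datatype tstate = NotStarted | Running | Expired

record lstate =
  l_pc :: pcv
  l_r :: nat
  l_aux :: "auxm set"
  l_tim :: "nat \<Rightarrow> tstate"
  l_rcvd :: "(nat \<times> auxm) set"   \<comment> \<open>(channel sender, signed message) of every received message\<close>
  l_est :: nat
  l_dec :: "nat option"

record config =
  cl :: "nat \<Rightarrow> lstate"
  transit :: "(nat \<times> nmsg) set"   \<comment> \<open>in-transit messages, tagged with their send step\<close>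
  sigs :: "auxm set"               \<comment> \<open>signed messages produced so far by non-faulty processes\<close>

definition coord :: "nat \<Rightarrow> nat \<Rightarrow> nat" where
  "coord n r = r mod n"

definition start_timer :: "(nat \<Rightarrow> tstate) \<Rightarrow> nat \<Rightarrow> (nat \<Rightarrow> tstate)" where
  "start_timer tm x = (if tm x = NotStarted then tm(x := Running) else tm)"

definition vals :: "nat \<Rightarrow> nat \<Rightarrow> nat \<Rightarrow> auxm set \<Rightarrow> nat set" where
  "vals n t r A = {v. v \<in> {0, 1} \<and> (\<exists>S \<subseteq> A. is_valid n t r v S)}"

text \<open>Choice of est in procedure Broadcast (nondeterministic if a faulty
  coordinator sent both values).\<close>
definition est_choice :: "nat \<Rightarrow> nat \<Rightarrow> lstate \<Rightarrow> nat \<Rightarrow> bool" where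
  "est_choice n t ls e =
     (let r = l_r ls; V = vals n t r (l_aux ls); bv = (r + 1) mod 2;
          c = coord n r;
          CP = {p \<in> V. (c, Aux c r p) \<in> l_rcvd ls}
      in if CP \<noteq> {} then e \<in> CP
         else if bv \<in> V then e = bv else e = 1 - bv)"

definition bcast :: "nat \<Rightarrow> nat \<Rightarrow> nat \<Rightarrow> lstate \<Rightarrow> lstate \<Rightarrow> nmsg set \<Rightarrow> bool" where
  "bcast n t i ls ls' M =
     (\<exists>e P. est_choice n t ls e \<and> P \<subseteq> l_aux ls \<and> is_valid n t (l_r ls) e P \<and>
            ls' = ls\<lparr>l_est := e\<rparr> \<and>
            M = {NMsg i d (Aux i (l_r ls) e) P | d. d \<in> {1..n}})"

text \<open>One local step of non-faulty process i (steps (1)--(7) of the loop,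
  and the initial broadcast); M is the set of messages sent.\<close>
definition lstep :: "nat \<Rightarrow> nat \<Rightarrow> (nat \<Rightarrow> nat) \<Rightarrow> nat \<Rightarrow> lstate \<Rightarrow> lstate \<Rightarrow> nmsg set \<Rightarrow> bool" where
  "lstep n t props i ls ls' M =
    (let r = l_r ls in
     (l_pc ls = PInit \<and> ls' = ls\<lparr>l_pc := P1\<rparr> \<and>
        M = {NMsg i d (Aux i 0 (props i)) {} | d. d \<in> {1..n}})
   \<or> (l_pc ls = P1 \<and> ls' = ls\<lparr>l_pc := P2, l_r := r + 1\<rparr> \<and> M = {})
   \<or> (l_pc ls = P2 \<and>
        (if i = coord n r then (\<exists>ls''. bcast n t i ls ls'' M \<and> ls' = ls''\<lparr>l_pc := P3\<rparr>)
         else ls' = ls\<lparr>l_pc := P3\<rparr> \<and> M = {}))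
   \<or> (l_pc ls = P3 \<and> ls' = ls\<lparr>l_pc := P3w, l_tim := start_timer (l_tim ls) (2 * r)\<rparr> \<and> M = {})
   \<or> (l_pc ls = P3w \<and> l_tim ls (2 * r) = Expired \<and> ls' = ls\<lparr>l_pc := P4\<rparr> \<and> M = {})
   \<or> (l_pc ls = P4 \<and>
        (if i \<noteq> coord n r then (\<exists>ls''. bcast n t i ls ls'' M \<and> ls' = ls''\<lparr>l_pc := P5\<rparr>)
         else ls' = ls\<lparr>l_pc := P5\<rparr> \<and> M = {}))
   \<or> (l_pc ls = P5 \<and> card (rsenders (l_aux ls) r) \<ge> n - t \<and> ls' = ls\<lparr>l_pc := P6\<rparr> \<and> M = {})
   \<or> (l_pc ls = P6 \<and> ls' = ls\<lparr>l_pc := P6w, l_tim := start_timer (l_tim ls) (2 * r + 1)\<rparr> \<and> M = {})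
   \<or> (l_pc ls = P6w \<and> l_tim ls (2 * r + 1) = Expired \<and> ls' = ls\<lparr>l_pc := P7\<rparr> \<and> M = {})
   \<or> (l_pc ls = P7 \<and> M = {} \<and>
        ls' = ls\<lparr>l_pc := P1,
                 l_dec := (if card (senders (l_aux ls) r (r mod 2)) \<ge> n - t \<and> l_dec ls = None
                           then Some (r mod 2) else l_dec ls)\<rparr>))"

definition well_formed :: "nat \<Rightarrow> nmsg \<Rightarrow> bool" where
  "well_formed n m = (vl (sm m) \<in> {0, 1} \<and> sgn (sm m) \<in> {1..n})"

definition recv_update :: "nat \<Rightarrow> nat \<Rightarrow> lstate \<Rightarrow> nmsg \<Rightarrow> lstate" where
  "recv_update n t ls m =
    (let a = sm m;
         A' = (if well_formed n m \<and> is_valid n t (rnd a) (vl a) (proofs m)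
               then l_aux ls \<union> {a} \<union> needed (rnd a) (vl a) (proofs m) else l_aux ls);
         R = {r. card (rsenders A' r) \<ge> t + 1}
     in ls\<lparr>l_aux := A',
           l_rcvd := insert (msrc m, a) (l_rcvd ls),
           l_tim := (\<lambda>x. if R \<noteq> {} \<and> x \<le> 2 * Max R then Expired else l_tim ls x)\<rparr>)"

datatype action = Loc nat | Rcv nat "nat \<times> nmsg" | TExp nat nat | Byz nat "nmsg set" | Idle

definition init_ls :: lstate where
  "init_ls = \<lparr>l_pc = PInit, l_r = 0, l_aux = {}, l_tim = (\<lambda>_. NotStarted),
              l_rcvd = {}, l_est = 0, l_dec = None\<rparr>"

definition init_cfg :: config where
  "init_cfg = \<lparr>cl = (\<lambda>_. init_ls), transit = {}, sigs = {}\<rparr>"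

definition step :: "nat \<Rightarrow> nat \<Rightarrow> nat set \<Rightarrow> (nat \<Rightarrow> nat) \<Rightarrow> nat \<Rightarrow> action \<Rightarrow> config \<Rightarrow> config \<Rightarrow> bool" where
  "step n t F props k a c c' =
    (case a of
       Loc i \<Rightarrow> i \<in> {1..n} - F \<and>
         (\<exists>ls' M. lstep n t props i (cl c i) ls' M \<and>
            c' = c\<lparr>cl := (cl c)(i := ls'), transit := transit c \<union> Pair k ` M,
                   sigs := sigs c \<union> sm ` M\<rparr>)
     | Rcv i x \<Rightarrow> i \<in> {1..n} - F \<and> x \<in> transit c \<and> mdst (snd x) = i \<and>
         c' = c\<lparr>cl := (cl c)(i := recv_update n t (cl c i) (snd x)), transit := transit c - {x}\<rparr>
     | TExp i y \<Rightarrow> i \<in> {1..n} - F \<and> l_tim (cl c i) y = Running \<and>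
         c' = c\<lparr>cl := (cl c)(i := (cl c i)\<lparr>l_tim := (l_tim (cl c i))(y := Expired)\<rparr>)\<rparr>
     | Byz j M \<Rightarrow> j \<in> F \<and> finite M \<and>
         (\<forall>m \<in> M. msrc m = j \<and> mdst m \<in> {1..n} \<and> finite (proofs m) \<and>
            (\<forall>a \<in> insert (sm m) (proofs m). sgn a \<in> {1..n} \<and> (sgn a \<notin> F \<longrightarrow> a \<in> sigs c))) \<and>
         c' = c\<lparr>transit := transit c \<union> Pair k ` M\<rparr>
     | Idle \<Rightarrow> c' = c)"

definition enabled :: "nat \<Rightarrow> nat \<Rightarrow> (nat \<Rightarrow> nat) \<Rightarrow> nat \<Rightarrow> lstate \<Rightarrow> bool" where
  "enabled n t props i ls = (\<exists>ls' M. lstep n t props i ls ls' M)"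

definition execution :: "nat \<Rightarrow> nat \<Rightarrow> nat set \<Rightarrow> (nat \<Rightarrow> nat) \<Rightarrow> (nat \<Rightarrow> config) \<Rightarrow> (nat \<Rightarrow> action) \<Rightarrow> bool" where
  "execution n t F props cfg act =
    (cfg 0 = init_cfg \<and>
     (\<forall>k. step n t F props k (act k) (cfg k) (cfg (Suc k))) \<and>
     \<comment> \<open>reliable channels: every message to a non-faulty process is eventually received\<close>
     (\<forall>k x. x \<in> transit (cfg k) \<and> mdst (snd x) \<in> {1..n} - F \<longrightarrow>
            (\<exists>k' \<ge> k. act k' = Rcv (mdst (snd x)) x)) \<and>
     \<comment> \<open>weak fairness of local steps of non-faulty processes\<close>
     (\<forall>k i. i \<in> {1..n} - F \<and> (\<forall>k' \<ge> k. enabled n t props i (cl (cfg k') i)) \<longrightarrow>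
            (\<exists>k' \<ge> k. act k' = Loc i)) \<and>
     \<comment> \<open>every started timer eventually expires\<close>
     (\<forall>k i y. i \<in> {1..n} - F \<and> l_tim (cl (cfg k) i) y = Running \<longrightarrow>
            (\<exists>k' \<ge> k. l_tim (cl (cfg k') i) y = Expired)))"

end

theory Submission
  imports Defs
begin

(* By induction on q, every non-faulty process completes round q and, within it, broadcasts a
   round-q AUX message together with a proof set validating it. Reliable channels then deliver to
   p_i, from each of the n - t non-faulty processes, a round-q message whose value is valid in
   aux_values_i. This already makes some value valid for round q + 1: for q = 0 one of the two
   proposals comes from t + 1 of them; otherwise, with b = q mod 2, either b is valid in round q,
   and a proof of b for round q is also one for round q + 1, or all n - t messages carry 1 - b and
   thereby form a proof of 1 - b. The same deliveries release every wait of round q + 1 (a valid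
   value for the broadcast, n - t round messages, and the timers, which expire), so weak fairness
   carries every non-faulty process through that round. *)

section \<open>Valid proof sets\<close>

lemma is_valid_needed:
  assumes "is_valid n t r e P"
  shows "is_valid n t r e (needed r e P)"
  using assms unfolding is_valid_def needed_def senders_def Let_def
  by (auto split: if_splits)

lemma is_valid_Suc_parity:
  assumes "q > 0" and "is_valid n t q (q mod 2) S"
  shows "is_valid n t (Suc q) (q mod 2) S"
proof -
  obtain p where q: "q = Suc p" using assms(1) gr0_implies_Suc by blast
  have "1 - p mod 2 = q mod 2" "q mod 2 \<noteq> p mod 2" unfolding q by (auto simp: mod_Suc)
  then show ?thesis using assms(2) unfolding is_valid_def Let_def q by (auto split: if_split_asm)
qed

lemma vals_mono: "A \<subseteq> B \<Longrightarrow> vals n t q A \<subseteq> vals n t q B"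
  unfolding vals_def by blast

definition valid_from_all :: "nat \<Rightarrow> nat \<Rightarrow> nat set \<Rightarrow> nat \<Rightarrow> auxm set \<Rightarrow> bool" where
  "valid_from_all n t C q A \<longleftrightarrow> (\<forall>j\<in>C. \<exists>e\<in>vals n t q A. Aux j q e \<in> A)"

lemma valid_from_all_rsenders:
  "valid_from_all n t C q A \<Longrightarrow> C \<subseteq> rsenders A q"
  unfolding valid_from_all_def rsenders_def by blast

lemma vals_Suc_nonempty:
  assumes "3 * t < n" and "finite C" and "n - t \<le> card C" and "valid_from_all n t C q A"
  shows "vals n t (Suc q) A \<noteq> {}"
proof (cases "q = 0")
  case True
  define C' where "C' v = {j \<in> C. Aux j 0 v \<in> A}" for v
  have "C \<subseteq> C' 0 \<union> C' 1"
    using assms(4) True unfolding valid_from_all_def vals_def C'_def by auto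
  then have "card C \<le> card (C' 0 \<union> C' 1)"
    by (rule card_mono[rotated]) (use assms(2) in \<open>simp add: C'_def\<close>)
  also have "\<dots> \<le> card (C' 0) + card (C' 1)" by (rule card_Un_le)
  finally have "t + 1 \<le> card (C' 0) \<or> t + 1 \<le> card (C' 1)" using assms(1,3) by linarith
  then obtain v where v: "v \<in> {0, 1}" "t + 1 \<le> card (C' v)" by (metis insert_iff)
  let ?S = "{Aux j 0 v | j. j \<in> C' v}"
  have "senders ?S 0 v = C' v" unfolding senders_def by auto
  then have "is_valid n t 1 v ?S" using v unfolding is_valid_def by simp
  moreover have "?S \<subseteq> A" unfolding C'_def by auto
  ultimately have "v \<in> vals n t (Suc q) A" using v(1) True unfolding vals_def by auto
  then show ?thesis by blast
next
  case q: False
  show ?thesis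
  proof (cases "q mod 2 \<in> vals n t q A")
    case True
    then obtain S where "S \<subseteq> A" "is_valid n t q (q mod 2) S" unfolding vals_def by blast
    then have "q mod 2 \<in> vals n t (Suc q) A"
      using is_valid_Suc_parity[of q] q unfolding vals_def by auto
    then show ?thesis by blast
  next
    case False
    let ?v = "1 - q mod 2"
    let ?S = "{Aux j q ?v | j. j \<in> C}"
    have "Aux j q ?v \<in> A" if j: "j \<in> C" for j
    proof -
      obtain e where e: "e \<in> vals n t q A" "Aux j q e \<in> A"
        using assms(4) j unfolding valid_from_all_def by blast
      have "e \<noteq> q mod 2" using False e(1) by blast
      moreover have "e = 0 \<or> e = 1" using e(1) unfolding vals_def by blast
      ultimately have "e = ?v" by presburger
      then show ?thesis using e(2) by simp
    qed
    then have "?S \<subseteq> A" by blast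
    have "senders ?S q ?v = C" unfolding senders_def by auto
    moreover have "?v \<noteq> q mod 2" by presburger
    ultimately have "is_valid n t (Suc q) ?v ?S"
      using q assms(3) unfolding is_valid_def Let_def by simp
    then have "?v \<in> vals n t (Suc q) A" using \<open>?S \<subseteq> A\<close> unfolding vals_def by auto
    then show ?thesis by blast
  qed
qed

section \<open>Local steps of a non-faulty process\<close>

lemma est_choice_in_01: "est_choice n t ls e \<Longrightarrow> e \<in> {0, 1}"
  unfolding est_choice_def vals_def Let_def by (auto split: if_splits)

lemma est_choice_exists:
  assumes "vals n t (l_r ls) (l_aux ls) \<noteq> {}"
  shows "\<exists>e\<in>vals n t (l_r ls) (l_aux ls). est_choice n t ls e"
proof -
  let ?V = "vals n t (l_r ls) (l_aux ls)" and ?bv = "(l_r ls + 1) mod 2"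
  let ?CP = "{p \<in> ?V. (coord n (l_r ls), Aux (coord n (l_r ls)) (l_r ls) p) \<in> l_rcvd ls}"
  consider (coordinator) "?CP \<noteq> {}" | (bv) "?CP = {}" "?bv \<in> ?V" | (other) "?CP = {}" "?bv \<notin> ?V"
    by blast
  then show ?thesis
  proof cases
    case coordinator
    then obtain e where "e \<in> ?CP" by blast
    then show ?thesis using coordinator unfolding est_choice_def Let_def by auto
  next
    case bv
    then have "est_choice n t ls ?bv" unfolding est_choice_def Let_def by simp
    then show ?thesis using bv by blast
  next
    case other
    obtain v where "v \<in> ?V" using assms by blast
    moreover have "v = 0 \<or> v = 1" using \<open>v \<in> ?V\<close> unfolding vals_def by blast
    ultimately have "1 - ?bv \<in> ?V" using other(2) by (metis diff_zero diff_self_eq_0 mod2_eq_if)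
    moreover have "est_choice n t ls (1 - ?bv)" using other unfolding est_choice_def Let_def by simp
    ultimately show ?thesis by blast
  qed
qed

lemma bcast_exists:
  assumes "vals n t (l_r ls) (l_aux ls) \<noteq> {}"
  shows "\<exists>ls' M. bcast n t i ls ls' M"
proof -
  obtain e where e: "e \<in> vals n t (l_r ls) (l_aux ls)" "est_choice n t ls e"
    using est_choice_exists[OF assms] by blast
  then obtain P where "P \<subseteq> l_aux ls" "is_valid n t (l_r ls) e P" unfolding vals_def by blast
  then show ?thesis using e(2) unfolding bcast_def by blast
qed

definition timers_advance :: "(nat \<Rightarrow> tstate) \<Rightarrow> (nat \<Rightarrow> tstate) \<Rightarrow> bool" where
  "timers_advance T T' \<longleftrightarrow>
     (\<forall>y. (T y = Expired \<longrightarrow> T' y = Expired) \<and> (T y \<noteq> NotStarted \<longrightarrow> T' y \<noteq> NotStarted))"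

lemma timers_advance_refl: "timers_advance T T"
  unfolding timers_advance_def by simp

lemma timers_advance_trans: "timers_advance T T' \<Longrightarrow> timers_advance T' T'' \<Longrightarrow> timers_advance T T''"
  unfolding timers_advance_def by simp

lemma timers_advance_start: "timers_advance T (start_timer T x)"
  unfolding timers_advance_def start_timer_def by simp

lemma timers_advance_expire: "timers_advance T (T(y := Expired))"
  unfolding timers_advance_def by simp

lemma start_timer_started: "start_timer T x x \<noteq> NotStarted"
  unfolding start_timer_def by simp

fun next_pc :: "pcv \<Rightarrow> nat \<Rightarrow> pcv \<times> nat" where
  "next_pc PInit r = (P1, r)"
| "next_pc P1 r = (P2, Suc r)"
| "next_pc P2 r = (P3, r)"
| "next_pc P3 r = (P3w, r)"
| "next_pc P3w r = (P4, r)"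
| "next_pc P4 r = (P5, r)"
| "next_pc P5 r = (P6, r)"
| "next_pc P6 r = (P6w, r)"
| "next_pc P6w r = (P7, r)"
| "next_pc P7 r = (P1, r)"

definition broadcast_step :: "nat \<Rightarrow> nat \<Rightarrow> pcv \<Rightarrow> nat \<Rightarrow> bool" where
  "broadcast_step n i pc r \<longleftrightarrow>
     pc = PInit \<and> r = 0 \<or> pc = P2 \<and> i = coord n r \<or> pc = P4 \<and> i \<noteq> coord n r"

lemma lstep_aux: "lstep n t props i ls ls' M \<Longrightarrow> l_aux ls' = l_aux ls"
  unfolding lstep_def bcast_def Let_def by (auto split: if_splits)

lemma lstep_proofs_known: "lstep n t props i ls ls' M \<Longrightarrow> m \<in> M \<Longrightarrow> proofs m \<subseteq> l_aux ls"
  unfolding lstep_def bcast_def Let_def by (auto split: if_splits)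

lemma lstep_timers_advance: "lstep n t props i ls ls' M \<Longrightarrow> timers_advance (l_tim ls) (l_tim ls')"
  unfolding lstep_def bcast_def Let_def
  by (auto simp: timers_advance_refl timers_advance_start split: if_splits)

lemma lstep_next_pc:
  "lstep n t props i ls ls' M \<Longrightarrow> (l_pc ls', l_r ls') = next_pc (l_pc ls) (l_r ls)"
  unfolding lstep_def bcast_def Let_def by (auto split: if_splits)

lemma lstep_starts_timer:
  assumes "lstep n t props i ls ls' M"
    and "l_pc ls = P3 \<and> y = 2 * l_r ls \<or> l_pc ls = P6 \<and> y = 2 * l_r ls + 1"
  shows "l_tim ls' y \<noteq> NotStarted"
  using assms start_timer_started unfolding lstep_def Let_def by auto

lemma lstep_broadcast:
  assumes "lstep n t props i ls ls' M" and "broadcast_step n i (l_pc ls) (l_r ls)"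
    and "props i \<in> {0, 1}"
  shows "\<exists>e P. e \<in> {0, 1} \<and> is_valid n t (l_r ls) e P \<and>
           M = {NMsg i d (Aux i (l_r ls) e) P | d. d \<in> {1..n}}"
proof -
  consider (init) "l_r ls = 0" "M = {NMsg i d (Aux i 0 (props i)) {} | d. d \<in> {1..n}}"
    | (bcast) ls'' where "bcast n t i ls ls'' M"
    using assms(1,2) unfolding lstep_def broadcast_step_def Let_def by auto
  then show ?thesis
  proof cases
    case init
    then show ?thesis
      using assms(3) by (intro exI[of _ "props i"] exI[of _ "{}"]) (simp add: is_valid_def)
  next
    case bcast
    then obtain e P where "est_choice n t ls e" "is_valid n t (l_r ls) e P"
      "M = {NMsg i d (Aux i (l_r ls) e) P | d. d \<in> {1..n}}"
      unfolding bcast_def by blast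
    then show ?thesis using est_choice_in_01 by (intro exI[of _ e] exI[of _ P]) simp
  qed
qed

lemma recv_update_aux_mono: "l_aux ls \<subseteq> l_aux (recv_update n t ls m)"
  unfolding recv_update_def Let_def by auto

lemma recv_update_pc_round:
  "(l_pc (recv_update n t ls m), l_r (recv_update n t ls m)) = (l_pc ls, l_r ls)"
  unfolding recv_update_def Let_def by simp

lemma recv_update_timers_advance: "timers_advance (l_tim ls) (l_tim (recv_update n t ls m))"
  unfolding recv_update_def Let_def timers_advance_def by auto

lemma recv_update_aux_new:
  "a \<in> l_aux (recv_update n t ls m) \<Longrightarrow> a \<in> l_aux ls \<or> a = sm m \<and> well_formed n m \<or> a \<in> proofs m"
  unfolding recv_update_def Let_def needed_def by (auto split: if_splits)

lemma recv_update_accepts: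
  assumes "well_formed n m" and "is_valid n t (rnd (sm m)) (vl (sm m)) (proofs m)"
  shows "sm m \<in> l_aux (recv_update n t ls m)"
    and "vl (sm m) \<in> vals n t (rnd (sm m)) (l_aux (recv_update n t ls m))"
proof -
  have aux: "l_aux (recv_update n t ls m) =
      l_aux ls \<union> {sm m} \<union> needed (rnd (sm m)) (vl (sm m)) (proofs m)"
    using assms unfolding recv_update_def Let_def by simp
  then show "sm m \<in> l_aux (recv_update n t ls m)" by simp
  show "vl (sm m) \<in> vals n t (rnd (sm m)) (l_aux (recv_update n t ls m))"
    using assms(1) is_valid_needed[OF assms(2)] aux unfolding vals_def well_formed_def by blast
qed

definition lstep_guard :: "nat \<Rightarrow> nat \<Rightarrow> nat \<Rightarrow> lstate \<Rightarrow> bool" where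
  "lstep_guard n t i ls \<longleftrightarrow>
     (case l_pc ls of
        P2 \<Rightarrow> i = coord n (l_r ls) \<longrightarrow> vals n t (l_r ls) (l_aux ls) \<noteq> {}
      | P3w \<Rightarrow> l_tim ls (2 * l_r ls) = Expired
      | P4 \<Rightarrow> i \<noteq> coord n (l_r ls) \<longrightarrow> vals n t (l_r ls) (l_aux ls) \<noteq> {}
      | P5 \<Rightarrow> n - t \<le> card (rsenders (l_aux ls) (l_r ls))
      | P6w \<Rightarrow> l_tim ls (2 * l_r ls + 1) = Expired
      | _ \<Rightarrow> True)"

lemma lstep_guard_enabled:
  assumes "lstep_guard n t i ls"
  shows "enabled n t props i ls"
proof (cases "l_pc ls")
  case P2
  show ?thesis
  proof (cases "i = coord n (l_r ls)")
    case True
    then have "vals n t (l_r ls) (l_aux ls) \<noteq> {}" using assms P2 unfolding lstep_guard_def by simp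
    then obtain ls'' M where "bcast n t i ls ls'' M" using bcast_exists by blast
    then have "lstep n t props i ls (ls''\<lparr>l_pc := P3\<rparr>) M" using P2 True unfolding lstep_def by auto
    then show ?thesis unfolding enabled_def by blast
  next
    case False
    then have "lstep n t props i ls (ls\<lparr>l_pc := P3\<rparr>) {}" using P2 unfolding lstep_def by simp
    then show ?thesis unfolding enabled_def by blast
  qed
next
  case P4
  show ?thesis
  proof (cases "i = coord n (l_r ls)")
    case True
    then have "lstep n t props i ls (ls\<lparr>l_pc := P5\<rparr>) {}" using P4 unfolding lstep_def by simp
    then show ?thesis unfolding enabled_def by blast
  next
    case False
    then have "vals n t (l_r ls) (l_aux ls) \<noteq> {}" using assms P4 unfolding lstep_guard_def by simp
    then obtain ls'' M where "bcast n t i ls ls'' M" using bcast_exists by blast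
    then have "lstep n t props i ls (ls''\<lparr>l_pc := P5\<rparr>) M" using P4 False unfolding lstep_def by auto
    then show ?thesis unfolding enabled_def by blast
  qed
qed (use assms in \<open>simp_all add: lstep_guard_def enabled_def lstep_def Let_def split del: if_split\<close>)

section \<open>Progress in an execution\<close>

definition signers_in_range :: "nat \<Rightarrow> config \<Rightarrow> bool" where
  "signers_in_range n c \<longleftrightarrow>
     (\<forall>j. \<forall>a\<in>l_aux (cl c j). sgn a \<in> {1..n}) \<and> (\<forall>x\<in>transit c. \<forall>a\<in>proofs (snd x). sgn a \<in> {1..n})"

locale consensus_execution =
  fixes n t :: nat and F :: "nat set" and props :: "nat \<Rightarrow> nat"
    and cfg :: "nat \<Rightarrow> config" and act :: "nat \<Rightarrow> action"
  assumes resilience: "3 * t < n"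
    and faulty_range: "F \<subseteq> {1..n}" and faulty_card: "card F \<le> t"
    and props_binary: "\<forall>j\<in>{1..n}. props j \<in> {0, 1}"
    and execution: "execution n t F props cfg act"
begin

abbreviation correct :: "nat set" where
  "correct \<equiv> {1..n} - F"

abbreviation aux :: "nat \<Rightarrow> nat \<Rightarrow> auxm set" where
  "aux k j \<equiv> l_aux (cl (cfg k) j)"

abbreviation tim :: "nat \<Rightarrow> nat \<Rightarrow> nat \<Rightarrow> tstate" where
  "tim k j \<equiv> l_tim (cl (cfg k) j)"

abbreviation pc_round :: "nat \<Rightarrow> nat \<Rightarrow> pcv \<times> nat" where
  "pc_round k j \<equiv> (l_pc (cl (cfg k) j), l_r (cl (cfg k) j))"

lemma step_at: "step n t F props k (act k) (cfg k) (cfg (Suc k))"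
  using execution unfolding execution_def by blast

lemma cfg_0: "cfg 0 = init_cfg"
  using execution unfolding execution_def by blast

lemma reliable_delivery:
  "x \<in> transit (cfg k) \<Longrightarrow> mdst (snd x) \<in> correct \<Longrightarrow> \<exists>k'. act k' = Rcv (mdst (snd x)) x"
  using execution unfolding execution_def by blast

lemma weakly_fair:
  "j \<in> correct \<Longrightarrow> \<forall>k'\<ge>k. enabled n t props j (cl (cfg k') j) \<Longrightarrow> \<exists>k'\<ge>k. act k' = Loc j"
  using execution unfolding execution_def by blast

lemma timer_expires: "j \<in> correct \<Longrightarrow> tim k j y = Running \<Longrightarrow> \<exists>k'. tim k' j y = Expired"
  using execution unfolding execution_def by blast

lemma card_correct: "n - t \<le> card correct"
  using faulty_range faulty_card by (simp add: card_Diff_subset finite_subset)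

lemma step_Loc:
  assumes "act k = Loc j"
  obtains M where "j \<in> correct" "lstep n t props j (cl (cfg k) j) (cl (cfg (Suc k)) j) M"
    "transit (cfg (Suc k)) = transit (cfg k) \<union> Pair k ` M"
    "\<And>i. i \<noteq> j \<Longrightarrow> cl (cfg (Suc k)) i = cl (cfg k) i"
  using step_at[of k] assms unfolding step_def by auto

lemma step_Rcv:
  assumes "act k = Rcv j x"
  shows "j \<in> correct" "x \<in> transit (cfg k)"
    "cl (cfg (Suc k)) j = recv_update n t (cl (cfg k) j) (snd x)"
    "\<And>i. i \<noteq> j \<Longrightarrow> cl (cfg (Suc k)) i = cl (cfg k) i"
    "transit (cfg (Suc k)) \<subseteq> transit (cfg k)"
  using step_at[of k] assms unfolding step_def by auto

lemma local_step_cases: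
  obtains (Loc) M where "act k = Loc j" "lstep n t props j (cl (cfg k) j) (cl (cfg (Suc k)) j) M"
  | (Rcv) x where "x \<in> transit (cfg k)"
      "cl (cfg (Suc k)) j = recv_update n t (cl (cfg k) j) (snd x)"
  | (TExp) y where "cl (cfg (Suc k)) j = (cl (cfg k) j)\<lparr>l_tim := (tim k j)(y := Expired)\<rparr>"
  | (unchanged) "act k \<noteq> Loc j" "cl (cfg (Suc k)) j = cl (cfg k) j"
proof (cases "act k")
  case (Loc i)
  then obtain M where "lstep n t props i (cl (cfg k) i) (cl (cfg (Suc k)) i) M"
    "\<And>j. j \<noteq> i \<Longrightarrow> cl (cfg (Suc k)) j = cl (cfg k) j"
    using step_Loc by metis
  then show ?thesis using that(1,4) Loc by (cases "i = j") auto
next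
  case (Rcv i x)
  then show ?thesis using step_Rcv[OF Rcv] that(2,4) by (cases "i = j") auto
next
  case (TExp i y)
  then show ?thesis using step_at[of k] that(3,4) unfolding step_def by (cases "i = j") auto
next
  case (Byz i M)
  then show ?thesis using step_at[of k] that(4) unfolding step_def by auto
next
  case Idle
  then show ?thesis using step_at[of k] that(4) unfolding step_def by auto
qed

lemma aux_Suc_mono: "aux k j \<subseteq> aux (Suc k) j"
  by (cases rule: local_step_cases[of k j]) (simp_all add: lstep_aux recv_update_aux_mono)

lemma timers_advance_Suc: "timers_advance (tim k j) (tim (Suc k) j)"
  by (cases rule: local_step_cases[of k j])
    (simp_all add: lstep_timers_advance recv_update_timers_advance timers_advance_refl
      timers_advance_expire)

lemma pc_round_Suc: "act k \<noteq> Loc j \<Longrightarrow> pc_round (Suc k) j = pc_round k j"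
  by (cases rule: local_step_cases[of k j]) (simp_all add: recv_update_pc_round)

lemma aux_mono: "k \<le> k' \<Longrightarrow> aux k j \<subseteq> aux k' j"
  by (induction k' rule: dec_induct) (use aux_Suc_mono in blast)+

lemma timers_advance_mono: "k \<le> k' \<Longrightarrow> timers_advance (tim k j) (tim k' j)"
  by (induction k' rule: dec_induct)
    (use timers_advance_refl timers_advance_trans timers_advance_Suc in blast)+

lemma eventually_expired:
  assumes "j \<in> correct" and "tim k j y \<noteq> NotStarted"
  shows "\<forall>\<^sub>F k' in sequentially. tim k' j y = Expired"
proof -
  have "\<exists>k0. tim k0 j y = Expired" using assms timer_expires by (cases "tim k j y") auto
  then obtain k0 where k0: "tim k0 j y = Expired" by blast
  show ?thesis
  proof (rule eventually_sequentiallyI)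
    fix k' assume "k0 \<le> k'"
    then show "tim k' j y = Expired"
      using k0 timers_advance_mono unfolding timers_advance_def by blast
  qed
qed

lemma signers_in_range_cfg: "signers_in_range n (cfg k)"
proof (induction k)
  case 0
  then show ?case using cfg_0 unfolding signers_in_range_def init_cfg_def init_ls_def by simp
next
  case (Suc k)
  have aux: "sgn a \<in> {1..n}" if "a \<in> aux (Suc k) j" for a j
  proof (cases rule: local_step_cases[of k j])
    case (Loc M)
    then show ?thesis using Suc that lstep_aux unfolding signers_in_range_def by metis
  next
    case (Rcv x)
    then show ?thesis using Suc that recv_update_aux_new[of a n t "cl (cfg k) j" "snd x"]
      unfolding signers_in_range_def well_formed_def by auto
  qed (use Suc that in \<open>auto simp: signers_in_range_def\<close>)
  have transit: "sgn a \<in> {1..n}" if "x \<in> transit (cfg (Suc k))" "a \<in> proofs (snd x)" for x a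
  proof (cases "act k")
    case (Loc i)
    then obtain M where M: "lstep n t props i (cl (cfg k) i) (cl (cfg (Suc k)) i) M"
      "transit (cfg (Suc k)) = transit (cfg k) \<union> Pair k ` M"
      using step_Loc by metis
    from that(1) M(2) consider (old) "x \<in> transit (cfg k)" | (new) m where "m \<in> M" "x = (k, m)"
      by blast
    then show ?thesis
    proof cases
      case old
      then show ?thesis using Suc that(2) unfolding signers_in_range_def by blast
    next
      case new
      then have "a \<in> aux k i" using that(2) lstep_proofs_known[OF M(1)] by auto
      then show ?thesis using Suc unfolding signers_in_range_def by blast
    qed
  next
    case (Rcv i y)
    then show ?thesis using Suc that step_Rcv(5) unfolding signers_in_range_def by blast
  qed (use Suc that step_at[of k] in \<open>auto simp: signers_in_range_def step_def\<close>)
  show ?case using aux transit unfolding signers_in_range_def by blast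
qed

(* Keeps rsenders finite, so that its cardinality really counts the senders. *)
lemma rsenders_range: "rsenders (aux k j) q \<subseteq> {1..n}"
  using signers_in_range_cfg[of k] unfolding signers_in_range_def rsenders_def by fastforce

lemma pc_round_stable:
  "k \<le> k' \<Longrightarrow> \<forall>m. k \<le> m \<and> m < k' \<longrightarrow> act m \<noteq> Loc j \<Longrightarrow> pc_round k' j = pc_round k j"
  by (induction k' rule: dec_induct) (auto simp: pc_round_Suc)

lemma progress:
  assumes j: "j \<in> correct" and at: "pc_round k j = (s, q)"
    and eventually_G: "\<forall>\<^sub>F k' in sequentially. G k'"
    and guard: "\<And>k'. G k' \<Longrightarrow> pc_round k' j = (s, q) \<Longrightarrow> lstep_guard n t j (cl (cfg k') j)"
    and successor: "next_pc s q = (s', q')"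
  shows "\<exists>k'. act k' = Loc j \<and> pc_round k' j = (s, q) \<and> pc_round (Suc k') j = (s', q')"
proof -
  have "\<exists>k'. act k' = Loc j \<and> pc_round k' j = (s, q)"
  proof (cases "\<exists>m. k \<le> m \<and> act m = Loc j")
    case True
    then obtain m where "k \<le> m" "act m = Loc j" "\<forall>m'<m. \<not> (k \<le> m' \<and> act m' = Loc j)"
      unfolding exists_least_iff[of "\<lambda>m. k \<le> m \<and> act m = Loc j"] by blast
    then have "pc_round m j = pc_round k j" using pc_round_stable by blast
    then show ?thesis using \<open>act m = Loc j\<close> at by auto
  next
    case False
    then have "\<forall>k'\<ge>k. pc_round k' j = (s, q)" using pc_round_stable at by auto
    moreover obtain N where "\<forall>k'\<ge>N. G k'"
      using eventually_G unfolding eventually_sequentially by blast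
    ultimately have "\<forall>k'\<ge>max k N. enabled n t props j (cl (cfg k') j)"
      using guard lstep_guard_enabled by simp
    then show ?thesis using weakly_fair[OF j] False by fastforce
  qed
  then obtain k' where k': "act k' = Loc j" "pc_round k' j = (s, q)" by blast
  then obtain M where "lstep n t props j (cl (cfg k') j) (cl (cfg (Suc k')) j) M"
    using step_Loc by metis
  then show ?thesis using k' lstep_next_pc successor by fastforce
qed

definition broadcasts :: "nat \<Rightarrow> nat \<Rightarrow> bool" where
  "broadcasts j q \<longleftrightarrow> (\<exists>k e P. e \<in> {0, 1} \<and> is_valid n t q e P \<and>
     (\<forall>d\<in>{1..n}. (k, NMsg j d (Aux j q e) P) \<in> transit (cfg (Suc k))))"

lemma broadcast_step_broadcasts:
  assumes "act k = Loc j" and "pc_round k j = (s, q)" and "broadcast_step n j s q"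
  shows "broadcasts j q"
proof -
  obtain M where M: "j \<in> correct" "lstep n t props j (cl (cfg k) j) (cl (cfg (Suc k)) j) M"
    "transit (cfg (Suc k)) = transit (cfg k) \<union> Pair k ` M"
    using step_Loc[OF assms(1)] by metis
  have q: "l_r (cl (cfg k) j) = q" and "broadcast_step n j (l_pc (cl (cfg k) j)) q"
    using assms(2,3) by simp_all
  moreover have "props j \<in> {0, 1}" using props_binary M(1) by blast
  ultimately obtain e P where eP: "e \<in> {0, 1}" "is_valid n t q e P"
    "M = {NMsg j d (Aux j q e) P | d. d \<in> {1..n}}"
    using lstep_broadcast[OF M(2)] unfolding q by blast
  then have "\<forall>d\<in>{1..n}. (k, NMsg j d (Aux j q e) P) \<in> transit (cfg (Suc k))" using M(3) by auto
  then show ?thesis using eP(1,2) unfolding broadcasts_def by blast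
qed

lemma timer_wait_expires:
  assumes "act k = Loc j" and "pc_round k j = (s, q)"
    and "s = P3 \<and> y = 2 * q \<or> s = P6 \<and> y = 2 * q + 1"
  shows "\<forall>\<^sub>F k' in sequentially. tim k' j y = Expired"
proof -
  obtain M where "j \<in> correct" "lstep n t props j (cl (cfg k) j) (cl (cfg (Suc k)) j) M"
    using step_Loc[OF assms(1)] by metis
  moreover have "tim (Suc k) j y \<noteq> NotStarted"
    using lstep_starts_timer[OF calculation(2)] assms(2,3) by auto
  ultimately show ?thesis using eventually_expired by blast
qed

lemma broadcast_delivered:
  assumes "broadcasts j q" and "j \<in> correct" and "i \<in> correct"
  shows "\<exists>k. \<exists>e\<in>vals n t q (aux k i). Aux j q e \<in> aux k i"
proof -
  obtain k e P where eP: "e \<in> {0, 1}" "is_valid n t q e P"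
    "\<forall>d\<in>{1..n}. (k, NMsg j d (Aux j q e) P) \<in> transit (cfg (Suc k))"
    using assms(1) unfolding broadcasts_def by blast
  let ?m = "NMsg j i (Aux j q e) P"
  have "(k, ?m) \<in> transit (cfg (Suc k))" using eP(3) assms(3) by blast
  then obtain k' where k': "act k' = Rcv i (k, ?m)" using reliable_delivery assms(3) by fastforce
  have "well_formed n ?m" using eP(1) assms(2) unfolding well_formed_def by simp
  then have "Aux j q e \<in> aux (Suc k') i" "e \<in> vals n t q (aux (Suc k') i)"
    using recv_update_accepts[of n ?m t] eP(2) step_Rcv(3)[OF k'] by simp_all
  then show ?thesis by blast
qed

lemma eventually_valid_from_all:
  assumes "\<forall>j\<in>correct. broadcasts j q" and "i \<in> correct"
  shows "\<forall>\<^sub>F k in sequentially. valid_from_all n t correct q (aux k i)"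
proof -
  have "\<forall>\<^sub>F k in sequentially. \<exists>e\<in>vals n t q (aux k i). Aux j q e \<in> aux k i"
    if j: "j \<in> correct" for j
  proof -
    obtain k0 e where "e \<in> vals n t q (aux k0 i)" "Aux j q e \<in> aux k0 i"
      using broadcast_delivered assms j by blast
    then show ?thesis
      using aux_mono[of k0 _ i] vals_mono by (intro eventually_sequentiallyI[of k0]) blast
  qed
  then show ?thesis unfolding valid_from_all_def by (intro eventually_ball_finite) auto
qed

lemma eventually_vals_Suc_nonempty:
  assumes "\<forall>j\<in>correct. broadcasts j q" and "i \<in> correct"
  shows "\<forall>\<^sub>F k in sequentially. vals n t (Suc q) (aux k i) \<noteq> {}"
  using eventually_valid_from_all[OF assms]
  by (rule eventually_mono) (rule vals_Suc_nonempty[OF resilience _ card_correct], simp_all)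

lemma eventually_rsenders_quorum:
  assumes "\<forall>j\<in>correct. broadcasts j q" and "i \<in> correct"
  shows "\<forall>\<^sub>F k in sequentially. n - t \<le> card (rsenders (aux k i) q)"
  using eventually_valid_from_all[OF assms]
proof (rule eventually_mono)
  fix k assume "valid_from_all n t correct q (aux k i)"
  then have "correct \<subseteq> rsenders (aux k i) q" by (rule valid_from_all_rsenders)
  then have "card correct \<le> card (rsenders (aux k i) q)"
    using rsenders_range by (meson card_mono finite_atLeastAtMost finite_subset)
  then show "n - t \<le> card (rsenders (aux k i) q)" using card_correct by linarith
qed

lemma round_first_half:
  assumes j: "j \<in> correct" and start: "pc_round k j = (P1, q)"
    and prev: "\<forall>i\<in>correct. broadcasts i q"
  shows "(\<exists>k. pc_round k j = (P5, Suc q)) \<and> broadcasts j (Suc q)"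
proof -
  note vals = eventually_vals_Suc_nonempty[OF prev j]
  have "\<exists>k'. act k' = Loc j \<and> pc_round k' j = (P1, q) \<and> pc_round (Suc k') j = (P2, Suc q)"
    by (rule progress[OF j start eventually_True]) (auto simp: lstep_guard_def)
  then obtain k1 where k1: "pc_round k1 j = (P2, Suc q)" by blast
  have "\<exists>k'. act k' = Loc j \<and> pc_round k' j = (P2, Suc q) \<and> pc_round (Suc k') j = (P3, Suc q)"
    by (rule progress[OF j k1 vals]) (auto simp: lstep_guard_def)
  then obtain k2 where k2: "act k2 = Loc j" "pc_round k2 j = (P2, Suc q)"
    "pc_round (Suc k2) j = (P3, Suc q)" by blast
  have "\<exists>k'. act k' = Loc j \<and> pc_round k' j = (P3, Suc q) \<and> pc_round (Suc k') j = (P3w, Suc q)"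
    by (rule progress[OF j k2(3) eventually_True]) (auto simp: lstep_guard_def)
  then obtain k3 where k3: "act k3 = Loc j" "pc_round k3 j = (P3, Suc q)"
    "pc_round (Suc k3) j = (P3w, Suc q)" by blast
  have "\<exists>k'. act k' = Loc j \<and> pc_round k' j = (P3w, Suc q) \<and> pc_round (Suc k') j = (P4, Suc q)"
    by (rule progress[OF j k3(3) timer_wait_expires[OF k3(1,2)]]) (auto simp: lstep_guard_def)
  then obtain k4 where k4: "pc_round k4 j = (P4, Suc q)" by blast
  have "\<exists>k'. act k' = Loc j \<and> pc_round k' j = (P4, Suc q) \<and> pc_round (Suc k') j = (P5, Suc q)"
    by (rule progress[OF j k4 vals]) (auto simp: lstep_guard_def)
  then obtain k5 where k5: "act k5 = Loc j" "pc_round k5 j = (P4, Suc q)"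
    "pc_round (Suc k5) j = (P5, Suc q)" by blast
  have "broadcasts j (Suc q)"
    using broadcast_step_broadcasts[OF k2(1,2)] broadcast_step_broadcasts[OF k5(1,2)]
    unfolding broadcast_step_def by blast
  then show ?thesis using k5(3) by blast
qed

lemma round_second_half:
  assumes j: "j \<in> correct" and start: "pc_round k j = (P5, q)"
    and cur: "\<forall>i\<in>correct. broadcasts i q"
  shows "\<exists>k. pc_round k j = (P1, q)"
proof -
  have "\<exists>k'. act k' = Loc j \<and> pc_round k' j = (P5, q) \<and> pc_round (Suc k') j = (P6, q)"
    by (rule progress[OF j start eventually_rsenders_quorum[OF cur j]]) (auto simp: lstep_guard_def)
  then obtain k1 where k1: "pc_round k1 j = (P6, q)" by blast
  have "\<exists>k'. act k' = Loc j \<and> pc_round k' j = (P6, q) \<and> pc_round (Suc k') j = (P6w, q)"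
    by (rule progress[OF j k1 eventually_True]) (auto simp: lstep_guard_def)
  then obtain k2 where k2: "act k2 = Loc j" "pc_round k2 j = (P6, q)"
    "pc_round (Suc k2) j = (P6w, q)" by blast
  have "\<exists>k'. act k' = Loc j \<and> pc_round k' j = (P6w, q) \<and> pc_round (Suc k') j = (P7, q)"
    by (rule progress[OF j k2(3) timer_wait_expires[OF k2(1,2)]]) (auto simp: lstep_guard_def)
  then obtain k3 where k3: "pc_round k3 j = (P7, q)" by blast
  have "\<exists>k'. act k' = Loc j \<and> pc_round k' j = (P7, q) \<and> pc_round (Suc k') j = (P1, q)"
    by (rule progress[OF j k3 eventually_True]) (auto simp: lstep_guard_def)
  then show ?thesis by blast
qed

lemma every_round_broadcast: "\<forall>j\<in>correct. (\<exists>k. pc_round k j = (P1, q)) \<and> broadcasts j q"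
proof (induction q)
  case 0
  show ?case
  proof
    fix j assume j: "j \<in> correct"
    have "pc_round 0 j = (PInit, 0)" using cfg_0 unfolding init_cfg_def init_ls_def by simp
    then have "\<exists>k. act k = Loc j \<and> pc_round k j = (PInit, 0) \<and> pc_round (Suc k) j = (P1, 0)"
      by (rule progress[OF j _ eventually_True]) (auto simp: lstep_guard_def)
    moreover have "broadcast_step n j PInit 0" unfolding broadcast_step_def by simp
    ultimately show "(\<exists>k. pc_round k j = (P1, 0)) \<and> broadcasts j 0"
      using broadcast_step_broadcasts by blast
  qed
next
  case (Suc q)
  then have "\<forall>j\<in>correct. (\<exists>k. pc_round k j = (P5, Suc q)) \<and> broadcasts j (Suc q)"
    using round_first_half by blast
  then show ?case using round_second_half by blast
qed

end

theorem lemma4: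
  fixes n t r i :: nat and F :: "nat set" and props :: "nat \<Rightarrow> nat"
    and cfg :: "nat \<Rightarrow> config" and act :: "nat \<Rightarrow> action"
  assumes "3 * t < n"
    and "F \<subseteq> {1..n}" and "card F \<le> t"
    and "\<forall>j \<in> {1..n}. props j \<in> {0, 1}"
    and "execution n t F props cfg act"
    and "r > 0"
    and "i \<in> {1..n}" and "i \<notin> F"
  shows "\<exists>k v S. v \<in> {0, 1} \<and> S \<subseteq> l_aux (cl (cfg k) i) \<and> is_valid n t r v S"
proof -
  interpret consensus_execution n t F props cfg act
    using assms(1-5) by unfold_locales
  obtain q where r: "r = Suc q" using \<open>r > 0\<close> gr0_implies_Suc by blast
  have "\<forall>j\<in>correct. broadcasts j q" using every_round_broadcast by blast
  then have "\<forall>\<^sub>F k in sequentially. vals n t r (aux k i) \<noteq> {}"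
    using eventually_vals_Suc_nonempty assms(7,8) unfolding r by blast
  then obtain k where "vals n t r (aux k i) \<noteq> {}"
    using eventually_happens'[OF sequentially_bot] by blast
  then show ?thesis unfolding vals_def by blast
qed

end
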